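(* Let $S_1=\mathbb{R}/2\pi\mathbb{Z}$ and let $u:[0,T)\times S_1\to\mathbb{R}$ be a smooth solution of the Camassa–Holm equation $$\partial_t u-\tfrac14\partial_{txx}u+3\,\partial_x u\,u-\tfrac12\,\partial_{xx}u\,\partial_x u-\tfrac14\,\partial_{xxx}u\,u=0 .$$ On $N=S_1\times\mathbb{R}_{>0}$ with coordinates $(\theta,r)$ and the Euclidean metric in polar coordinates $h=r^2(\mathrm{d}\theta)^2+(\mathrm{d}r)^2$ (i.e. $N\cong\mathbb{R}^2\setminus\{0\}$), define the time-dependent vector field $$v(t,\theta,r)=u(t,\theta)\,\partial_\theta+\tfrac{r}{2}\,\partial_\theta u(t,\theta)\,\partial_r .$$ Then there exists a function $p:[0,T)\times N\to\mathbb{R}$ such that $$\partial_t v+\nabla_v v=-\nabla p,\qquad \operatorname{div}(\rho v)=0,\quad\text{with }\rho(\theta,r)=r^{-4},$$ where $\nabla$ is the Levi-Civita connection of $h$, $\nabla p$ the $h$-gradient, and $\operatorname{div}$ the Euclidean divergence (with respect to the area form $r\,\mathrm{d}r\wedge\mathrm{d}\theta$). Equivalently, $v$ solves the incompressible Euler equation for the density $r^{-4}\,r\,\mathrm{d}r\,\mathrm{d}\theta$.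
   Context: Here $\partial_x$ and $\partial_\theta$ both denote differentiation in the angular variable. The flow $\varphi$ of $u$ and the map $\Psi(\theta,r)=r\sqrt{\partial_\theta\varphi(\theta)}\,e^{i\varphi(\theta)}$ are related by $\partial_t\Psi\circ\Psi^{-1}=v$; this is not needed for the statement. *)

theory Defs
  imports "HOL-Analysis.Analysis"
begin

definition pderiv_dir :: "'a::euclidean_space \<Rightarrow> ('a \<Rightarrow> 'b::real_normed_vector) \<Rightarrow> 'a \<Rightarrow> 'b" where
  "pderiv_dir e f = (\<lambda>x. frechet_derivative f (at x) e)"

definition smooth_on :: "'a::euclidean_space set \<Rightarrow> ('a \<Rightarrow> 'b::real_normed_vector) \<Rightarrow> bool" where
  "smooth_on U f \<longleftrightarrow> open U \<and>
     (\<forall>ds. set ds \<subseteq> Basis \<longrightarrow> (\<forall>x\<in>U. foldr pderiv_dir ds f differentiable (at x)))"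

definition dt :: "(real \<Rightarrow> real \<Rightarrow> real) \<Rightarrow> real \<Rightarrow> real \<Rightarrow> real" where
  "dt u = (\<lambda>t x. deriv (\<lambda>s. u s x) t)"

definition dx :: "(real \<Rightarrow> real \<Rightarrow> real) \<Rightarrow> real \<Rightarrow> real \<Rightarrow> real" where
  "dx u = (\<lambda>t x. deriv (\<lambda>y. u t y) x)"

text \<open>The vector field v = u d_theta + (r/2) u_theta d_r on N = S_1 x R_{>0},
  transported to R^2 \ {0} = C \ {0} via (theta, r) \<mapsto> r e^{i theta}:
  d_theta \<mapsto> i z and d_r \<mapsto> z/|z|, so v(t,z) = u(t,theta) i z + (u_theta(t,theta)/2) z
  with theta = Arg z (u is 2 pi periodic, so any choice of the angle gives the same).\<close>
definition vfield :: "(real \<Rightarrow> real \<Rightarrow> real) \<Rightarrow> real \<Rightarrow> complex \<Rightarrow> complex" where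
  "vfield u t z = complex_of_real (u t (Arg z)) * \<i> * z
                  + complex_of_real (dx u t (Arg z) / 2) * z"

definition divergence :: "(complex \<Rightarrow> complex) \<Rightarrow> complex \<Rightarrow> real" where
  "divergence F z = Re (frechet_derivative F (at z) 1) + Im (frechet_derivative F (at z) \<i>)"

text \<open>d_t v + nabla_v v for the flat (Levi-Civita) connection of the Euclidean metric.\<close>
definition euler_lhs :: "(real \<Rightarrow> real \<Rightarrow> real) \<Rightarrow> real \<Rightarrow> complex \<Rightarrow> complex" where
  "euler_lhs u t z = vector_derivative (\<lambda>s. vfield u s z) (at t)
                     + frechet_derivative (vfield u t) (at z) (vfield u t z)"

end

theory Submission
  imports Defs
begin

(* The field is v(t, z) = c(t, arg z) z with c = u_theta/2 + i u.  For a 2 pi-periodic complex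
   function c, the field w |-> c(arg w) w has derivative h |-> c h + Im (h/z) c_theta z at z.  Hence
   the acceleration d_t v + nabla_v v is z (c_t + c^2 + Im c * c_theta), and the divergence of
   |z|^-n v is (Im c_theta + (2 - n) Re c) / |z|^n, which vanishes for n = 4 because
   Im c_theta = u_theta = 2 Re c.  Here the acceleration is z (P + i Q) with
   P = u_t_theta/2 + u_theta^2/4 - u^2 + u u_theta_theta/2 and Q = u_t + 2 u u_theta, and the
   Camassa-Holm equation says precisely that P_theta = 2 Q.  Since w |-> |w|^2/2 A(arg w) has
   gradient z (A + i A_theta/2), the acceleration is the gradient of |z|^2 P(arg z)/2, and
   p = -|z|^2 P(arg z)/2 is the pressure.
   Smoothness is only assumed on an open set containing [0,T) x R, so u_t_theta = u_theta_t needs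
   Schwarz's theorem, and the periodicity of u_t_theta comes from one-sided time derivatives at t = 0. *)

lemma has_real_derivative_pderiv_dir:
  fixes G :: "'a::euclidean_space \<Rightarrow> real"
  assumes "G differentiable (at (a + s *\<^sub>R e))"
  shows "((\<lambda>s. G (a + s *\<^sub>R e)) has_real_derivative pderiv_dir e G (a + s *\<^sub>R e)) (at s)"
proof -
  let ?f = "frechet_derivative G (at (a + s *\<^sub>R e))"
  have G: "(G has_derivative ?f) (at (a + s *\<^sub>R e))"
    using assms frechet_derivative_works by blast
  have "((\<lambda>s. a + s *\<^sub>R e) has_derivative (\<lambda>h. h *\<^sub>R e)) (at s)"
    by (auto intro!: derivative_eq_intros)
  then have "((\<lambda>s. G (a + s *\<^sub>R e)) has_derivative (\<lambda>h. ?f (h *\<^sub>R e))) (at s)"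
    using has_derivative_compose G by blast
  moreover have "?f (h *\<^sub>R e) = h * pderiv_dir e G (a + s *\<^sub>R e)" for h
    using linear_scale[OF has_derivative_linear[OF G]] by (simp add: pderiv_dir_def)
  ultimately show ?thesis by (simp add: has_field_derivative_def mult.commute[of _ "pderiv_dir e G _"])
qed

lemma has_real_derivative_pderiv_dir_fst:
  fixes G :: "real \<times> real \<Rightarrow> real"
  assumes "G differentiable (at (t, x))"
  shows "((\<lambda>s. G (s, x)) has_real_derivative pderiv_dir (1, 0) G (t, x)) (at t)"
  using has_real_derivative_pderiv_dir[of G "(0, x)" t "(1, 0)"] assms by simp

lemma has_real_derivative_pderiv_dir_snd:
  fixes G :: "real \<times> real \<Rightarrow> real"
  assumes "G differentiable (at (t, x))"
  shows "((\<lambda>y. G (t, y)) has_real_derivative pderiv_dir (0, 1) G (t, x)) (at x)"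
  using has_real_derivative_pderiv_dir[of G "(t, 0)" x "(0, 1)"] assms by simp

lemma pderiv_dir_transform_within_open:
  assumes "F differentiable (at x)" "open X" "x \<in> X" "\<And>y. y \<in> X \<Longrightarrow> F y = G y"
  shows "pderiv_dir e F x = pderiv_dir e G x"
  using frechet_derivative_transform_within_open[OF assms] by (simp add: pderiv_dir_def)

lemma smooth_on_pderiv_dir:
  assumes "smooth_on U F" "e \<in> Basis"
  shows "smooth_on U (pderiv_dir e F)"
proof -
  have "foldr pderiv_dir ds (pderiv_dir e F) = foldr pderiv_dir (ds @ [e]) F" for ds
    by simp
  then show ?thesis
    using assms unfolding smooth_on_def by (metis Un_least empty_subsetI insert_subset set_append list.set)
qed

lemma smooth_on_transform:
  assumes F: "smooth_on U F" and eq: "\<And>x. x \<in> U \<Longrightarrow> F x = G x"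
  shows "smooth_on U G"
proof -
  have U: "open U" using F by (simp add: smooth_on_def)
  have F_diff: "foldr pderiv_dir ds F differentiable (at x)" if "set ds \<subseteq> Basis" "x \<in> U" for ds x
    using F that by (simp add: smooth_on_def)
  have pderivs_eq: "foldr pderiv_dir ds F x = foldr pderiv_dir ds G x"
    if "set ds \<subseteq> Basis" "x \<in> U" for ds x
    using that
  proof (induction ds arbitrary: x)
    case (Cons d ds)
    then show ?case
      using pderiv_dir_transform_within_open[OF F_diff U] by simp
  qed (use eq in simp)
  have "foldr pderiv_dir ds G differentiable (at x)" if "set ds \<subseteq> Basis" "x \<in> U" for ds x
    using F_diff[OF that] has_derivative_transform_within_open[OF _ U that(2)] pderivs_eq[OF that(1)]
    unfolding differentiable_def by metis
  then show ?thesis using U by (simp add: smooth_on_def)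
qed

lemma smooth_on_imp_differentiable: "smooth_on U F \<Longrightarrow> x \<in> U \<Longrightarrow> F differentiable (at x)"
  unfolding smooth_on_def by (metis empty_subsetI foldr_Nil id_apply list.set(1))

lemma dt_eq_pderiv_dir:
  assumes "(\<lambda>(t, x). u t x) differentiable (at (t, x))"
  shows "dt u t x = pderiv_dir (1, 0) (\<lambda>(t, x). u t x) (t, x)"
  using DERIV_imp_deriv[OF has_real_derivative_pderiv_dir_fst[OF assms]] by (simp add: dt_def)

lemma dx_eq_pderiv_dir:
  assumes "(\<lambda>(t, x). u t x) differentiable (at (t, x))"
  shows "dx u t x = pderiv_dir (0, 1) (\<lambda>(t, x). u t x) (t, x)"
  using DERIV_imp_deriv[OF has_real_derivative_pderiv_dir_snd[OF assms]] by (simp add: dx_def)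

lemma smooth_on_dt:
  assumes "smooth_on U (\<lambda>(t, x). u t x)"
  shows "smooth_on U (\<lambda>(t, x). dt u t x)"
proof (rule smooth_on_transform[OF smooth_on_pderiv_dir[OF assms, of "(1, 0)"]])
  fix p assume "p \<in> U"
  then show "pderiv_dir (1, 0) (\<lambda>(t, x). u t x) p = (\<lambda>(t, x). dt u t x) p"
    using dt_eq_pderiv_dir smooth_on_imp_differentiable[OF assms] by (cases p) simp
qed (simp add: Basis_prod_def)

lemma smooth_on_dx:
  assumes "smooth_on U (\<lambda>(t, x). u t x)"
  shows "smooth_on U (\<lambda>(t, x). dx u t x)"
proof (rule smooth_on_transform[OF smooth_on_pderiv_dir[OF assms, of "(0, 1)"]])
  fix p assume "p \<in> U"
  then show "pderiv_dir (0, 1) (\<lambda>(t, x). u t x) p = (\<lambda>(t, x). dx u t x) p"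
    using dx_eq_pderiv_dir smooth_on_imp_differentiable[OF assms] by (cases p) simp
qed (simp add: Basis_prod_def)

lemma smooth_on_has_real_derivative_dt:
  assumes "smooth_on U (\<lambda>(t, x). u t x)" "(t, x) \<in> U"
  shows "((\<lambda>s. u s x) has_real_derivative dt u t x) (at t)"
  using has_real_derivative_pderiv_dir_fst[OF smooth_on_imp_differentiable[OF assms]]
    dt_eq_pderiv_dir[OF smooth_on_imp_differentiable[OF assms]] by simp

lemma smooth_on_has_real_derivative_dx:
  assumes "smooth_on U (\<lambda>(t, x). u t x)" "(t, x) \<in> U"
  shows "((\<lambda>y. u t y) has_real_derivative dx u t x) (at x)"
  using has_real_derivative_pderiv_dir_snd[OF smooth_on_imp_differentiable[OF assms]]
    dx_eq_pderiv_dir[OF smooth_on_imp_differentiable[OF assms]] by simp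

section \<open>Symmetry of mixed partial derivatives\<close>

lemma second_difference_mean_value:
  fixes f :: "real \<Rightarrow> real \<Rightarrow> real"
  assumes h: "0 < h"
    and f': "\<And>s y. s \<in> {a..a+h} \<Longrightarrow> y \<in> {b..b+h} \<Longrightarrow>
               ((\<lambda>s. f s y) has_real_derivative f' s y) (at s)"
    and f'': "\<And>s y. s \<in> {a..a+h} \<Longrightarrow> y \<in> {b..b+h} \<Longrightarrow>
               ((\<lambda>y. f' s y) has_real_derivative f'' s y) (at y)"
  shows "\<exists>s\<in>{a<..<a+h}. \<exists>y\<in>{b<..<b+h}.
           f (a+h) (b+h) - f (a+h) b - f a (b+h) + f a b = h * h * f'' s y"
proof -
  have "((\<lambda>s. f s (b+h) - f s b) has_real_derivative f' s (b+h) - f' s b) (at s)"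
    if "a \<le> s" "s \<le> a + h" for s
    using that h by (intro DERIV_diff f') auto
  then obtain s where s: "a < s" "s < a + h"
    and outer: "(f (a+h) (b+h) - f (a+h) b) - (f a (b+h) - f a b) = ((a+h) - a) * (f' s (b+h) - f' s b)"
    using MVT2[of a "a+h" "\<lambda>s. f s (b+h) - f s b" "\<lambda>s. f' s (b+h) - f' s b"] h by auto
  have "((\<lambda>y. f' s y) has_real_derivative f'' s y) (at y)" if "b \<le> y" "y \<le> b + h" for y
    using that s by (intro f'') auto
  then obtain y where y: "b < y" "y < b + h" and inner: "f' s (b+h) - f' s b = ((b+h) - b) * f'' s y"
    using MVT2[of b "b+h" "\<lambda>y. f' s y" "f'' s"] h by auto
  show ?thesis
    using s y outer inner by (intro bexI[of _ s] bexI[of _ y]) (auto simp: algebra_simps)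
qed

lemma second_difference_quotient_tendsto:
  fixes f :: "real \<Rightarrow> real \<Rightarrow> real"
  assumes ev: "\<forall>\<^sub>F (s, y) in nhds (a, b). ((\<lambda>s. f s y) has_real_derivative f' s y) (at s)
                                       \<and> ((\<lambda>y. f' s y) has_real_derivative f'' s y) (at y)"
    and cont: "isCont (\<lambda>(s, y). f'' s y) (a, b)"
  shows "((\<lambda>h. (f (a+h) (b+h) - f (a+h) b - f a (b+h) + f a b) / (h * h)) \<longlongrightarrow> f'' a b) (at_right 0)"
  unfolding tendsto_iff
proof (intro allI impI)
  fix e :: real assume "e > 0"
  have "((\<lambda>(s, y). f'' s y) \<longlongrightarrow> f'' a b) (at (a, b))"
    using cont by (simp add: isCont_def)
  from tendstoD[OF this \<open>e > 0\<close>]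
  have "\<forall>\<^sub>F q in nhds (a, b). q \<noteq> (a, b) \<longrightarrow> dist ((\<lambda>(s, y). f'' s y) q) (f'' a b) < e"
    by (simp add: eventually_at_filter)
  then have "\<forall>\<^sub>F q in nhds (a, b). dist ((\<lambda>(s, y). f'' s y) q) (f'' a b) < e"
    by eventually_elim (use \<open>e > 0\<close> in auto)
  with ev have "\<forall>\<^sub>F q in nhds (a, b). (case q of (s, y) \<Rightarrow>
      ((\<lambda>s. f s y) has_real_derivative f' s y) (at s) \<and> ((\<lambda>y. f' s y) has_real_derivative f'' s y) (at y)
      \<and> dist (f'' s y) (f'' a b) < e)"
    by eventually_elim auto
  then obtain d where d: "d > 0" and near_d: "\<forall>q. dist q (a, b) < d \<longrightarrow> (case q of (s, y) \<Rightarrow>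
      ((\<lambda>s. f s y) has_real_derivative f' s y) (at s) \<and> ((\<lambda>y. f' s y) has_real_derivative f'' s y) (at y)
      \<and> dist (f'' s y) (f'' a b) < e)"
    unfolding eventually_nhds_metric by blast
  have near: "((\<lambda>s. f s y) has_real_derivative f' s y) (at s)"
      "((\<lambda>y. f' s y) has_real_derivative f'' s y) (at y)" "dist (f'' s y) (f'' a b) < e"
    if "dist (s, y) (a, b) < d" for s y
    using near_d that by auto
  have in_ball: "dist (s, y) (a, b) < d" if "s \<in> {a..a+h}" "y \<in> {b..b+h}" "h < d / 2" for s y h
  proof -
    have "dist (s, y) (a, b) \<le> \<bar>s - a\<bar> + \<bar>y - b\<bar>"
      by (simp add: dist_Pair_Pair dist_real_def sqrt_sum_squares_le_sum_abs)
    then show ?thesis using that by auto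
  qed
  show "\<forall>\<^sub>F h in at_right 0.
      dist ((f (a+h) (b+h) - f (a+h) b - f a (b+h) + f a b) / (h * h)) (f'' a b) < e"
    unfolding eventually_at_right[OF half_gt_zero[OF d]]
  proof (intro exI[of _ "d / 2"] conjI allI impI)
    fix h :: real assume h: "0 < h" "h < d / 2"
    have derivs: "((\<lambda>s. f s y) has_real_derivative f' s y) (at s)"
        "((\<lambda>y. f' s y) has_real_derivative f'' s y) (at y)"
      if "s \<in> {a..a+h}" "y \<in> {b..b+h}" for s y
      using near(1,2)[OF in_ball[OF that h(2)]] by auto
    obtain s y where sy: "s \<in> {a<..<a+h}" "y \<in> {b<..<b+h}"
      and "f (a+h) (b+h) - f (a+h) b - f a (b+h) + f a b = h * h * f'' s y"
      using second_difference_mean_value[OF h(1) derivs] by blast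
    moreover have "dist (f'' s y) (f'' a b) < e"
      using sy h by (intro near(3) in_ball) auto
    ultimately show "dist ((f (a+h) (b+h) - f (a+h) b - f a (b+h) + f a b) / (h * h)) (f'' a b) < e"
      using h by simp
  qed (use d in auto)
qed

lemma pderiv_dir_mixed_commute:
  fixes G :: "real \<times> real \<Rightarrow> real"
  assumes U: "open U" "(a, b) \<in> U"
    and diff: "\<And>q. q \<in> U \<Longrightarrow> G differentiable (at q)"
      "\<And>q. q \<in> U \<Longrightarrow> pderiv_dir (1, 0) G differentiable (at q)"
      "\<And>q. q \<in> U \<Longrightarrow> pderiv_dir (0, 1) G differentiable (at q)"
    and cont: "isCont (pderiv_dir (0, 1) (pderiv_dir (1, 0) G)) (a, b)"
      "isCont (pderiv_dir (1, 0) (pderiv_dir (0, 1) G)) (a, b)"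
  shows "pderiv_dir (1, 0) (pderiv_dir (0, 1) G) (a, b) = pderiv_dir (0, 1) (pderiv_dir (1, 0) G) (a, b)"
proof -
  let ?D1 = "pderiv_dir (1, 0)" and ?D2 = "pderiv_dir (0, 1)"
  have near: "\<forall>\<^sub>F q in nhds (a, b). q \<in> U"
    using U by (rule eventually_nhds_in_open)
  have "\<forall>\<^sub>F (s, y) in nhds (a, b). ((\<lambda>s. G (s, y)) has_real_derivative ?D1 G (s, y)) (at s)
      \<and> ((\<lambda>y. ?D1 G (s, y)) has_real_derivative ?D2 (?D1 G) (s, y)) (at y)"
    using near by (rule eventually_mono)
      (auto intro!: has_real_derivative_pderiv_dir_fst has_real_derivative_pderiv_dir_snd diff)
  moreover have "isCont (\<lambda>(s, y). ?D2 (?D1 G) (s, y)) (a, b)"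
    using cont(1) by (simp add: case_prod_unfold)
  ultimately have "((\<lambda>h. (G (a+h, b+h) - G (a+h, b) - G (a, b+h) + G (a, b)) / (h * h))
      \<longlongrightarrow> ?D2 (?D1 G) (a, b)) (at_right 0)"
    by (rule second_difference_quotient_tendsto)
  moreover have "((\<lambda>h. (G (a+h, b+h) - G (a+h, b) - G (a, b+h) + G (a, b)) / (h * h))
      \<longlongrightarrow> ?D1 (?D2 G) (a, b)) (at_right 0)"
  proof -
    have "open (prod.swap -` U)"
      by (rule continuous_open_vimage[OF U(1)]) (auto intro: continuous_intros)
    then have "\<forall>\<^sub>F q in nhds (b, a). prod.swap q \<in> U"
      using U(2) eventually_nhds_in_open by force
    then have "\<forall>\<^sub>F (y, s) in nhds (b, a). ((\<lambda>y. G (s, y)) has_real_derivative ?D2 G (s, y)) (at y)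
        \<and> ((\<lambda>s. ?D2 G (s, y)) has_real_derivative ?D1 (?D2 G) (s, y)) (at s)"
      by (rule eventually_mono)
        (auto intro!: has_real_derivative_pderiv_dir_fst has_real_derivative_pderiv_dir_snd diff)
    moreover have "isCont (\<lambda>(y, s). ?D1 (?D2 G) (s, y)) (b, a)"
      using isCont_o2[of "(b, a)" "\<lambda>p. (snd p, fst p)" "?D1 (?D2 G)"] cont(2)
      by (simp add: case_prod_unfold continuous_intros)
    ultimately have "((\<lambda>h. (G (a+h, b+h) - G (a, b+h) - G (a+h, b) + G (a, b)) / (h * h))
        \<longlongrightarrow> ?D1 (?D2 G) (a, b)) (at_right 0)"
      by (rule second_difference_quotient_tendsto)
    then show ?thesis by (simp add: algebra_simps)
  qed
  ultimately show ?thesis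
    using tendsto_unique[OF trivial_limit_at_right_real] by blast
qed

lemma smooth_on_dt_dx_commute:
  assumes u: "smooth_on U (\<lambda>(t, x). u t x)" and tx: "(t, x) \<in> U"
  shows "dt (dx u) t x = dx (dt u) t x"
proof -
  let ?F = "\<lambda>(t, x). u t x" and ?D1 = "pderiv_dir (1, 0)" and ?D2 = "pderiv_dir (0, 1)"
  have U: "open U" using u by (simp add: smooth_on_def)
  have basis: "(1, 0) \<in> (Basis :: (real \<times> real) set)" "(0, 1) \<in> (Basis :: (real \<times> real) set)"
    by (simp_all add: Basis_prod_def)
  note smooth = smooth_on_pderiv_dir[OF u basis(1)] smooth_on_pderiv_dir[OF u basis(2)]
    smooth_on_pderiv_dir[OF smooth_on_pderiv_dir[OF u basis(1)] basis(2)]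
    smooth_on_pderiv_dir[OF smooth_on_pderiv_dir[OF u basis(2)] basis(1)]
  have "dt (dx u) t x = ?D1 (\<lambda>(t, x). dx u t x) (t, x)"
    by (rule dt_eq_pderiv_dir[OF smooth_on_imp_differentiable[OF smooth_on_dx[OF u] tx]])
  also have "\<dots> = ?D1 (?D2 ?F) (t, x)"
  proof (rule pderiv_dir_transform_within_open[OF smooth_on_imp_differentiable[OF smooth_on_dx[OF u] tx] U tx])
    fix p assume "p \<in> U"
    then show "(\<lambda>(t, x). dx u t x) p = ?D2 ?F p"
      using dx_eq_pderiv_dir smooth_on_imp_differentiable[OF u] by (cases p) simp
  qed
  also have "\<dots> = ?D2 (?D1 ?F) (t, x)"
    by (rule pderiv_dir_mixed_commute[OF U tx smooth_on_imp_differentiable[OF u]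
          smooth_on_imp_differentiable[OF smooth(1)] smooth_on_imp_differentiable[OF smooth(2)]
          differentiable_imp_continuous_within[OF smooth_on_imp_differentiable[OF smooth(3) tx]]
          differentiable_imp_continuous_within[OF smooth_on_imp_differentiable[OF smooth(4) tx]]])
  also have "\<dots> = ?D2 (\<lambda>(t, x). dt u t x) (t, x)"
  proof (rule pderiv_dir_transform_within_open[OF smooth_on_imp_differentiable[OF smooth(1) tx] U tx])
    fix p assume "p \<in> U"
    then show "?D1 ?F p = (\<lambda>(t, x). dt u t x) p"
      using dt_eq_pderiv_dir smooth_on_imp_differentiable[OF u] by (cases p) simp
  qed
  also have "\<dots> = dx (dt u) t x"
    by (rule dx_eq_pderiv_dir[OF smooth_on_imp_differentiable[OF smooth_on_dt[OF u] tx], symmetric])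
  finally show ?thesis .
qed

lemma periodic_derivative:
  fixes g :: "real \<Rightarrow> real"
  assumes per: "\<And>x. g (x + p) = g x"
    and "(g has_real_derivative g' (x + p)) (at (x + p))" and "(g has_real_derivative g' x) (at x)"
  shows "g' (x + p) = g' x"
proof -
  have "((\<lambda>y. g (y + p)) has_real_derivative g' (x + p)) (at x)"
    using assms(2) DERIV_shift by blast
  then show ?thesis using per assms(3) DERIV_unique by simp
qed

lemma has_real_derivative_unique_on:
  fixes f g :: "real \<Rightarrow> real"
  assumes f: "(f has_real_derivative a) (at t)" and g: "(g has_real_derivative b) (at t)"
    and eq: "\<And>s. s \<in> S \<Longrightarrow> f s = g s" and t: "t \<in> S" and nontrivial: "at t within S \<noteq> bot"
  shows "a = b"
proof -
  have "(g has_real_derivative a) (at t within S)"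
    using has_field_derivative_transform_within[OF has_field_derivative_at_within[OF f] zero_less_one t] eq
    by blast
  then show ?thesis
    using has_field_derivative_unique[OF _ has_field_derivative_at_within[OF g] nontrivial] by blast
qed

lemma smooth_on_slice_derivatives:
  assumes u: "smooth_on U (\<lambda>(t, x). u t x)" and tU: "\<And>y. (t, y) \<in> U"
  shows "(u t has_real_derivative dx u t x) (at x)"
    and "(dx u t has_real_derivative dx (dx u) t x) (at x)"
    and "(dx (dx u) t has_real_derivative dx (dx (dx u)) t x) (at x)"
    and "(dt (dx u) t has_real_derivative dx (dx (dt u)) t x) (at x)"
    and "((\<lambda>s. u s x) has_real_derivative dt u t x) (at t)"
    and "((\<lambda>s. dx u s x) has_real_derivative dt (dx u) t x) (at t)"
proof -
  have "dt (dx u) t = dx (dt u) t"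
    using smooth_on_dt_dx_commute[OF u tU] by (simp add: fun_eq_iff)
  then show "(dt (dx u) t has_real_derivative dx (dx (dt u)) t x) (at x)"
    using smooth_on_has_real_derivative_dx[OF smooth_on_dx[OF smooth_on_dt[OF u]] tU] by simp
qed (use smooth_on_has_real_derivative_dx[OF u tU] smooth_on_has_real_derivative_dx[OF smooth_on_dx[OF u] tU]
      smooth_on_has_real_derivative_dx[OF smooth_on_dx[OF smooth_on_dx[OF u]] tU]
      smooth_on_has_real_derivative_dt[OF u tU] smooth_on_has_real_derivative_dt[OF smooth_on_dx[OF u] tU]
    in simp_all)

lemma smooth_on_slice_periodic:
  assumes u: "smooth_on U (\<lambda>(t, x). u t x)" and U: "{0..<T} \<times> UNIV \<subseteq> U"
    and per: "\<forall>t\<in>{0..<T}. \<forall>x. u t (x + 2 * pi) = u t x" and t: "t \<in> {0..<T}"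
  shows "dx u t (x + 2*pi) = dx u t x"
    and "dx (dx u) t (x + 2*pi) = dx (dx u) t x"
    and "dt (dx u) t (x + 2*pi) = dt (dx u) t x"
proof -
  have tU: "(s, y) \<in> U" if "s \<in> {0..<T}" for s y
    using U that by auto
  note d = smooth_on_slice_derivatives[OF u tU]
  have per1: "dx u s (y + 2*pi) = dx u s y" if s: "s \<in> {0..<T}" for s y
    using periodic_derivative[where g = "u s" and g' = "dx u s", OF _ d(1)[OF s] d(1)[OF s]] per s by simp
  then show "dx u t (x + 2*pi) = dx u t x" using t .
  show "dx (dx u) t (x + 2*pi) = dx (dx u) t x"
    using periodic_derivative[where g = "dx u t" and g' = "dx (dx u) t", OF _ d(2)[OF t] d(2)[OF t]] per1 t
    by simp
  \<comment> \<open>Periodicity is only known for times in \<open>{0..<T}\<close>, so at \<open>t = 0\<close> the time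
    derivatives can only be compared one-sidedly.\<close>
  have "t islimpt {0..<T}" using t by simp
  then have nontrivial: "at t within {0..<T} \<noteq> bot" by (simp add: trivial_limit_within)
  have "\<And>s. s \<in> {0..<T} \<Longrightarrow> dx u s (x + 2*pi) = dx u s x" by (rule per1)
  from has_real_derivative_unique_on[OF d(6)[OF t, of "x + 2*pi"] d(6)[OF t, of x] this t nontrivial]
  show "dt (dx u) t (x + 2*pi) = dt (dx u) t x" .
qed

section \<open>Fields of the form c(arg z) z\<close>

lemma periodic_shift_int:
  fixes g :: "real \<Rightarrow> 'a"
  assumes per: "\<And>x. g (x + 2*pi) = g x"
  shows "g (x + 2 * pi * of_int k) = g x"
proof (induction k arbitrary: x rule: int_induct[where k = 0])
  case (step1 i)
  then show ?case using per[of "x + 2 * pi * of_int i"] by (simp add: algebra_simps)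
next
  case (step2 i)
  then show ?case using per[of "x + 2 * pi * of_int (i - 1)"] step2.IH[of "x - 2*pi"]
    by (simp add: algebra_simps)
qed simp

lemma periodic_comp_Arg_eq:
  fixes g :: "real \<Rightarrow> 'a"
  assumes per: "\<And>x. g (x + 2*pi) = g x" and "z \<noteq> 0" "w \<noteq> 0"
  shows "g (Arg z + Arg (w / z)) = g (Arg w)"
proof -
  have "cis (Arg z + Arg (w / z)) = cis (Arg w)"
    using assms by (simp flip: cis_mult add: cis_Arg sgn_mult sgn_zero_iff)
  then obtain k :: int where "Arg z + Arg (w / z) = Arg w + 2 * pi * k"
    using sin_cos_eq_iff by (metis cis.sel)
  then show ?thesis using periodic_shift_int[of g, OF per] by metis
qed

lemma has_derivative_periodic_comp_Arg:
  fixes g :: "real \<Rightarrow> 'a::real_normed_vector"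
  assumes per: "\<And>x. g (x + 2*pi) = g x"
    and der: "(g has_vector_derivative g') (at (Arg z))"
    and z: "z \<noteq> 0"
  shows "((\<lambda>w. g (Arg w)) has_derivative (\<lambda>h. Im (h / z) *\<^sub>R g')) (at z)"
proof -
  have "((\<lambda>w. Ln (w / z)) has_field_derivative inverse (z / z) * inverse z) (at z)"
    using z by (intro DERIV_chain2[OF has_field_derivative_Ln]) (auto intro!: derivative_eq_intros simp: divide_inverse)
  then have Ln: "((\<lambda>w. Ln (w / z)) has_derivative (\<lambda>h. h / z)) (at z)"
    using z by (simp add: has_field_derivative_def divide_inverse mult.commute[of _ "inverse z"])
  have "((\<lambda>w. g (Arg z + Im (Ln (w / z)))) has_derivative (\<lambda>h. Im (h / z) *\<^sub>R g')) (at z)"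
    using has_derivative_compose[OF has_derivative_add[OF has_derivative_const has_derivative_Im[OF Ln]],
        of g "\<lambda>h. h *\<^sub>R g'"] der z
    by (simp add: has_vector_derivative_def o_def)
  \<comment> \<open>\<open>Arg z + Im (Ln (w / z))\<close> is smooth at \<open>w = z\<close> and agrees with \<open>Arg w\<close>
    modulo \<open>2 * pi\<close>.\<close>
  then show ?thesis
  proof (rule has_derivative_transform_within_open[where s = "- {0}"])
    fix w :: complex assume "w \<in> - {0}"
    then show "g (Arg z + Im (Ln (w / z))) = g (Arg w)"
      using periodic_comp_Arg_eq[of g, OF per z] z by (simp add: Arg_eq_Im_Ln[symmetric])
  qed (use z in auto)
qed

lemma has_derivative_angular_field:
  fixes c :: "real \<Rightarrow> complex"
  assumes per: "\<And>x. c (x + 2*pi) = c x"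
    and der: "(c has_vector_derivative c') (at (Arg z))"
    and z: "z \<noteq> 0"
  shows "((\<lambda>w. c (Arg w) * w) has_derivative (\<lambda>h. c (Arg z) * h + Im (h / z) *\<^sub>R c' * z)) (at z)"
  using has_derivative_periodic_comp_Arg[of c, OF per der z]
  by (auto intro!: derivative_eq_intros simp: algebra_simps)

lemma has_derivative_inverse_norm_power:
  fixes z :: "'a::real_inner"
  assumes "z \<noteq> 0"
  shows "((\<lambda>w. 1 / norm w ^ n) has_derivative (\<lambda>h. - real n * (z \<bullet> h) / norm z ^ (n + 2))) (at z)"
proof -
  have "- (real n * (h \<bullet> sgn z) * norm z ^ (n - 1) / (norm z ^ n * norm z ^ n))
      = - real n * (z \<bullet> h) / norm z ^ (n + 2)" for h
    using assms by (cases n) (simp_all add: sgn_div_norm inner_commute field_simps)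
  then show ?thesis
    using assms by (auto intro!: derivative_eq_intros has_derivative_norm[OF assms])
qed

lemma has_derivative_angular_potential:
  fixes A :: "real \<Rightarrow> real"
  assumes per: "\<And>x. A (x + 2*pi) = A x"
    and der: "(A has_real_derivative A') (at (Arg z))"
    and z: "z \<noteq> 0"
  shows "((\<lambda>w. (norm w)\<^sup>2 / 2 * A (Arg w)) has_derivative
           (\<lambda>h. (z * (A (Arg z) + \<i> * complex_of_real (A' / 2))) \<bullet> h)) (at z)"
proof -
  have "((\<lambda>w. (norm w)\<^sup>2 / 2 * A (Arg w)) has_derivative
      (\<lambda>h. (z \<bullet> h) * A (Arg z) + (norm z)\<^sup>2 / 2 * (Im (h / z) * A'))) (at z)"
    using has_derivative_periodic_comp_Arg[of A, OF per _ z] der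
    by (auto intro!: derivative_eq_intros simp: has_real_derivative_iff_has_vector_derivative)
  moreover have "(z \<bullet> h) * A (Arg z) + (norm z)\<^sup>2 / 2 * (Im (h / z) * A')
      = (z * (A (Arg z) + \<i> * complex_of_real (A' / 2))) \<bullet> h" for h
  proof -
    have "(norm z)\<^sup>2 * Im (h / z) = Re z * Im h - Im z * Re h"
    proof -
      have "Im (h / z) = (Re z * Im h - Im z * Re h) / (norm z)\<^sup>2"
        by (simp add: Im_divide cmod_power2 algebra_simps)
      then show ?thesis using z by simp
    qed
    then show ?thesis by (simp add: inner_complex_def algebra_simps flip: distrib_left)
  qed
  ultimately show ?thesis by simp
qed

lemma divergence_weighted_angular_field:
  fixes c :: "real \<Rightarrow> complex"
  assumes per: "\<And>x. c (x + 2*pi) = c x"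
    and der: "(c has_vector_derivative c') (at (Arg z))"
    and z: "z \<noteq> 0"
  shows "divergence (\<lambda>w. of_real (1 / norm w ^ n) * (c (Arg w) * w)) z
           = (Im c' + (2 - real n) * Re (c (Arg z))) / norm z ^ n"
proof -
  define c0 where "c0 = c (Arg z)"
  have radial: "z \<bullet> (c0 * z) = Re c0 * (norm z)\<^sup>2"
    unfolding cmod_power2 by (simp add: inner_complex_def algebra_simps power2_eq_square)
  have angular: "Im (1 / z) * Re (c' * z) + Im (\<i> / z) * Im (c' * z) = Im c'"
  proof -
    have "Im z * Im z + Re z * Re z = (norm z)\<^sup>2"
      unfolding cmod_power2 by (simp add: power2_eq_square)
    then have nz: "Im z * Im z + Re z * Re z \<noteq> 0" using z by simp
    have "Im (1 / z) * Re (c' * z) + Im (\<i> / z) * Im (c' * z)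
        = Im c' * (Im z * Im z + Re z * Re z) / (Im z * Im z + Re z * Re z)"
      by (simp add: Im_divide power2_eq_square add_divide_distrib diff_divide_distrib algebra_simps)
    then show ?thesis by (metis nonzero_mult_div_cancel_right nz)
  qed
  define D where "D = (\<lambda>h. of_real (1 / norm z ^ n) * (c0 * h + Im (h / z) *\<^sub>R c' * z)
                          + of_real (- real n * (z \<bullet> h) / norm z ^ (n + 2)) * (c0 * z))"
  have "((\<lambda>w. of_real (1 / norm w ^ n) * (c (Arg w) * w)) has_derivative D) (at z)"
    unfolding D_def c0_def
    by (rule has_derivative_mult[OF has_derivative_of_real[OF has_derivative_inverse_norm_power[OF z]]
          has_derivative_angular_field[of c, OF per der z]])
  then have "divergence (\<lambda>w. of_real (1 / norm w ^ n) * (c (Arg w) * w)) z = Re (D 1) + Im (D \<i>)"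
    by (simp add: divergence_def frechet_derivative_at[symmetric])
  also have "\<dots> = (2 * Re c0 + (Im (1 / z) * Re (c' * z) + Im (\<i> / z) * Im (c' * z))) / norm z ^ n
      - real n * (z \<bullet> (c0 * z)) / norm z ^ (n + 2)"
    by (simp add: D_def inner_complex_def add_divide_distrib diff_divide_distrib algebra_simps)
  also have "\<dots> = (Im c' + (2 - real n) * Re c0) / norm z ^ n"
    unfolding radial angular using z by (simp add: power_add field_simps power2_eq_square)
  finally show ?thesis by (simp add: c0_def)
qed

lemma material_derivative_angular_field:
  fixes c :: "real \<Rightarrow> real \<Rightarrow> complex"
  assumes per: "\<And>x. c t (x + 2*pi) = c t x"
    and der_angle: "(c t has_vector_derivative c') (at (Arg z))"
    and der_time: "((\<lambda>s. c s (Arg z)) has_vector_derivative c\<^sub>t) (at t)"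
    and z: "z \<noteq> 0"
  shows "vector_derivative (\<lambda>s. c s (Arg z) * z) (at t)
           + frechet_derivative (\<lambda>w. c t (Arg w) * w) (at z) (c t (Arg z) * z)
         = z * (c\<^sub>t + (c t (Arg z))\<^sup>2 + Im (c t (Arg z)) *\<^sub>R c')"
proof -
  have "((\<lambda>s. c s (Arg z) * z) has_vector_derivative c\<^sub>t * z) (at t)"
    using der_time by (rule has_vector_derivative_mult_left)
  then have "vector_derivative (\<lambda>s. c s (Arg z) * z) (at t) = c\<^sub>t * z"
    by (rule vector_derivative_at)
  moreover have "frechet_derivative (\<lambda>w. c t (Arg w) * w) (at z)
      = (\<lambda>h. c t (Arg z) * h + Im (h / z) *\<^sub>R c' * z)"
    using has_derivative_angular_field[of "c t", OF per der_angle z] by (rule frechet_derivative_at[symmetric])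
  ultimately show ?thesis
    using z by (simp add: power2_eq_square algebra_simps)
qed

text \<open>The angular derivative of \<open>vfield_coeff u t\<close> is \<open>vfield_coeff (dx u) t\<close>.\<close>

definition vfield_coeff :: "(real \<Rightarrow> real \<Rightarrow> real) \<Rightarrow> real \<Rightarrow> real \<Rightarrow> complex" where
  "vfield_coeff u t x = Complex (dx u t x / 2) (u t x)"

definition pressure_profile :: "(real \<Rightarrow> real \<Rightarrow> real) \<Rightarrow> real \<Rightarrow> real \<Rightarrow> real" where
  "pressure_profile u t x =
     dt (dx u) t x / 2 + (dx u t x)\<^sup>2 / 4 - (u t x)\<^sup>2 + u t x * dx (dx u) t x / 2"

lemma vfield_eq_coeff: "vfield u t = (\<lambda>w. vfield_coeff u t (Arg w) * w)"
  by (simp add: fun_eq_iff vfield_def vfield_coeff_def Complex_eq algebra_simps)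

lemma vfield_coeff_periodic:
  assumes "\<And>x. u t (x + 2*pi) = u t x" and "\<And>x. dx u t (x + 2*pi) = dx u t x"
  shows "vfield_coeff u t (x + 2*pi) = vfield_coeff u t x"
  by (simp add: vfield_coeff_def assms)

lemma has_vector_derivative_Complex:
  assumes "(f has_real_derivative f') F" and "(g has_real_derivative g') F"
  shows "((\<lambda>x. Complex (f x) (g x)) has_vector_derivative Complex f' g') F"
  using assms by (simp add: has_vector_derivative_complex_iff)

lemma euler_lhs_vfield:
  assumes per0: "\<And>x. u t (x + 2*pi) = u t x" and per1: "\<And>x. dx u t (x + 2*pi) = dx u t x"
    and d0: "(u t has_real_derivative dx u t (Arg z)) (at (Arg z))"
    and d1: "(dx u t has_real_derivative dx (dx u) t (Arg z)) (at (Arg z))"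
    and t0: "((\<lambda>s. u s (Arg z)) has_real_derivative dt u t (Arg z)) (at t)"
    and t1: "((\<lambda>s. dx u s (Arg z)) has_real_derivative dt (dx u) t (Arg z)) (at t)"
    and z: "z \<noteq> 0"
  shows "euler_lhs u t z
           = z * (pressure_profile u t (Arg z) + \<i> * (dt u t (Arg z) + 2 * u t (Arg z) * dx u t (Arg z)))"
proof -
  have "euler_lhs u t z = vector_derivative (\<lambda>s. vfield_coeff u s (Arg z) * z) (at t)
           + frechet_derivative (\<lambda>w. vfield_coeff u t (Arg w) * w) (at z) (vfield_coeff u t (Arg z) * z)"
    by (simp add: euler_lhs_def vfield_eq_coeff)
  also have "\<dots> = z * (Complex (dt (dx u) t (Arg z) / 2) (dt u t (Arg z))
      + (vfield_coeff u t (Arg z))\<^sup>2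
      + Im (vfield_coeff u t (Arg z)) *\<^sub>R vfield_coeff (dx u) t (Arg z))"
    using material_derivative_angular_field[of "vfield_coeff u", OF vfield_coeff_periodic[OF per0 per1]
        has_vector_derivative_Complex[OF DERIV_cdivide[OF d1, of 2] d0, folded vfield_coeff_def]
        has_vector_derivative_Complex[OF DERIV_cdivide[OF t1, of 2] t0, folded vfield_coeff_def] z] .
  also have "\<dots> = z * (pressure_profile u t (Arg z) + \<i> * (dt u t (Arg z) + 2 * u t (Arg z) * dx u t (Arg z)))"
    by (simp add: vfield_coeff_def pressure_profile_def complex_eq_iff power2_eq_square scaleR_conv_of_real algebra_simps)
  finally show ?thesis .
qed

lemma divergence_weighted_vfield:
  assumes per0: "\<And>x. u t (x + 2*pi) = u t x" and per1: "\<And>x. dx u t (x + 2*pi) = dx u t x"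
    and d0: "(u t has_real_derivative dx u t (Arg z)) (at (Arg z))"
    and d1: "(dx u t has_real_derivative dx (dx u) t (Arg z)) (at (Arg z))"
    and z: "z \<noteq> 0"
  shows "divergence (\<lambda>w. of_real (1 / norm w ^ 4) * vfield u t w) z = 0"
proof -
  have "divergence (\<lambda>w. of_real (1 / norm w ^ 4) * (vfield_coeff u t (Arg w) * w)) z
      = (Im (vfield_coeff (dx u) t (Arg z)) + (2 - real 4) * Re (vfield_coeff u t (Arg z))) / norm z ^ 4"
    using divergence_weighted_angular_field[of "vfield_coeff u t", OF vfield_coeff_periodic[OF per0 per1]
        has_vector_derivative_Complex[OF DERIV_cdivide[OF d1, of 2] d0, folded vfield_coeff_def] z] .
  then show ?thesis by (simp add: vfield_eq_coeff vfield_coeff_def)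
qed

lemma pressure_profile_has_real_derivative:
  assumes d0: "(u t has_real_derivative dx u t x) (at x)"
    and d1: "(dx u t has_real_derivative dx (dx u) t x) (at x)"
    and d2: "(dx (dx u) t has_real_derivative dx (dx (dx u)) t x) (at x)"
    and d3: "(dt (dx u) t has_real_derivative dx (dx (dt u)) t x) (at x)"
    and CH: "dt u t x - 1/4 * dx (dx (dt u)) t x + 3 * dx u t x * u t x
        - 1/2 * dx (dx u) t x * dx u t x - 1/4 * dx (dx (dx u)) t x * u t x = 0"
  shows "(pressure_profile u t has_real_derivative 2 * (dt u t x + 2 * u t x * dx u t x)) (at x)"
proof -
  have "(pressure_profile u t has_real_derivative
      dx (dx (dt u)) t x / 2 + dx u t x * dx (dx u) t x / 2 - 2 * u t x * dx u t x
        + (dx u t x * dx (dx u) t x + u t x * dx (dx (dx u)) t x) / 2) (at x)"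
    unfolding pressure_profile_def[abs_def]
    by (rule DERIV_cdivide derivative_eq_intros d0 d1 d2 d3 refl | simp add: algebra_simps)+
  moreover have "dx (dx (dt u)) t x / 2 + dx u t x * dx (dx u) t x / 2 - 2 * u t x * dx u t x
      + (dx u t x * dx (dx u) t x + u t x * dx (dx (dx u)) t x) / 2
      = 2 * (dt u t x + 2 * u t x * dx u t x)"
  proof -
    have CH': "dx (dx (dt u)) t x = 4 * dt u t x + 12 * dx u t x * u t x
        - 2 * dx (dx u) t x * dx u t x - dx (dx (dx u)) t x * u t x"
      using CH by linarith
    show ?thesis unfolding CH' by (simp add: field_simps)
  qed
  ultimately show ?thesis by simp
qed

theorem theorem1p1:
  fixes u :: "real \<Rightarrow> real \<Rightarrow> real" and T :: real
  assumes smooth: "\<exists>U. {0..<T} \<times> UNIV \<subseteq> U \<and> smooth_on U (\<lambda>(t, x). u t x)"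
    and periodic: "\<forall>t\<in>{0..<T}. \<forall>x. u t (x + 2 * pi) = u t x"
    and CH: "\<forall>t\<in>{0..<T}. \<forall>x.
        dt u t x - 1/4 * dx (dx (dt u)) t x + 3 * dx u t x * u t x
        - 1/2 * dx (dx u) t x * dx u t x - 1/4 * dx (dx (dx u)) t x * u t x = 0"
  shows "\<exists>p :: real \<Rightarrow> complex \<Rightarrow> real. \<forall>t\<in>{0..<T}. \<forall>z. z \<noteq> 0 \<longrightarrow>
           (p t has_derivative (\<lambda>h. (- euler_lhs u t z) \<bullet> h)) (at z) \<and>
           divergence (\<lambda>w. complex_of_real (1 / norm w ^ 4) * vfield u t w) z = 0"
proof -
  obtain U where U: "{0..<T} \<times> UNIV \<subseteq> U" and u: "smooth_on U (\<lambda>(t, x). u t x)"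
    using smooth by blast
  show ?thesis
  proof (intro exI[of _ "\<lambda>t w. - ((norm w)\<^sup>2 / 2 * pressure_profile u t (Arg w))"] ballI allI impI conjI)
    fix t and z :: complex assume t: "t \<in> {0..<T}" and z: "z \<noteq> 0"
    have "(t, y) \<in> U" for y using U t by auto
    note d = smooth_on_slice_derivatives[OF u this]
    note per = periodic[rule_format, OF t] smooth_on_slice_periodic[OF u U periodic t]
    have per_P: "pressure_profile u t (x + 2*pi) = pressure_profile u t x" for x
      by (simp add: pressure_profile_def per)
    have accel: "euler_lhs u t z = z * (pressure_profile u t (Arg z)
        + \<i> * complex_of_real (2 * (dt u t (Arg z) + 2 * u t (Arg z) * dx u t (Arg z)) / 2))"
      using euler_lhs_vfield[OF per(1,2) d(1,2,5,6) z] by simp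
    have potential: "((\<lambda>w. (norm w)\<^sup>2 / 2 * pressure_profile u t (Arg w)) has_derivative
        (\<lambda>h. euler_lhs u t z \<bullet> h)) (at z)"
      unfolding accel
      by (rule has_derivative_angular_potential[OF per_P
            pressure_profile_has_real_derivative[OF d(1-4) CH[rule_format, OF t]] z])
    show "((\<lambda>w. - ((norm w)\<^sup>2 / 2 * pressure_profile u t (Arg w))) has_derivative
        (\<lambda>h. (- euler_lhs u t z) \<bullet> h)) (at z)"
      using has_derivative_minus[OF potential] by simp
    show "divergence (\<lambda>w. complex_of_real (1 / norm w ^ 4) * vfield u t w) z = 0"
      by (rule divergence_weighted_vfield[OF per(1,2) d(1,2) z])
  qed
qed

end
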